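(* Let $(G,S,\tau,\mu,c,\gamma)$ be a generalized network flow instance and $x\in\mathbb{R}_{\ge0}^E$ with $x_e\in[0,\mu_e]$ for every $e\in E$, and let $v\in V\setminus\{\tau\}$. Then the minimum cost of a fractional augmenting path from $v$ in $G^x$, assuming one exists, is attained by an augmenting path.
   Context: A generalized network flow instance: digraph $G=(V,E)$ without anti-parallel edges, sources $S\subseteq V$ with no incoming edges, sink $\tau\in V\setminus S$ with no outgoing edges, and for each edge $e$ a capacity $\mu_e>0$, cost $c_e>0$ and gain $\gamma_e>0$. Residual graph $G^x=(V,E^x)$ with parameters $\mu^x,c^x,\gamma^x$: for every $uv\in E$ with $x_{uv}<\mu_{uv}$ there is a forward edge $uv$ with $\mu^x_{uv}=\mu_{uv}-x_{uv}$, $c^x_{uv}=c_{uv}$, $\gamma^x_{uv}=\gamma_{uv}$; for every $uv\in E$ with $x_{uv}>0$ there is a backward edge $vu$ with $\mu^x_{vu}=\gamma_{uv}x_{uv}$, $c^x_{vu}=0$, $\gamma^x_{vu}=1/\gamma_{uv}$. A fractional augmenting path from $s\in V\setminus\{\tau\}$ in $G^x$ is a vector $f\in\mathbb{R}_{\ge0}^{E^x}$ (capacities are ignored) such that $\sum_{e\in\delta^+_{G^x}(w)}f_e-\sum_{e\in\delta^-_{G^x}(w)}\gamma^x_ef_e$ equals $1$ for $w=s$ and $0$ for $w\in V\setminus\{s,\tau\}$; its cost is $\sum_{e\in E^x}c^x_ef_e$. It is an augmenting path if moreover its support is (a) a path from $s$ to $\tau$ in $G^x$, or (b) a cycle in $G^x$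 containing $s$ but not $\tau$, or (c) the union of a cycle $C$ in $G^x$ containing neither $s$ nor $\tau$ and a path in $G^x$ from $s$ to $C$ internally disjoint from $C$. *)

theory Defs
  imports Complex_Main
begin

type_synonym 'v edge = "'v \<times> 'v"

definition gnf_instance ::
  "'v set \<Rightarrow> 'v edge set \<Rightarrow> 'v set \<Rightarrow> 'v \<Rightarrow> ('v edge \<Rightarrow> real) \<Rightarrow> ('v edge \<Rightarrow> real)
   \<Rightarrow> ('v edge \<Rightarrow> real) \<Rightarrow> bool" where
  "gnf_instance V E S \<tau> \<mu> c \<gamma> \<longleftrightarrow>
     finite V \<and> E \<subseteq> V \<times> V \<and>
     (\<forall>u w. (u, w) \<in> E \<longrightarrow> (w, u) \<notin> E) \<and>
     S \<subseteq> V \<and> (\<forall>e\<in>E. snd e \<notin> S) \<and>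
     \<tau> \<in> V \<and> \<tau> \<notin> S \<and> (\<forall>e\<in>E. fst e \<noteq> \<tau>) \<and>
     (\<forall>e\<in>E. \<mu> e > 0 \<and> c e > 0 \<and> \<gamma> e > 0)"

text \<open>Residual graph G^x. Since G has no anti-parallel edges, every residual edge
  is determined by its endpoints: it is forward iff it lies in E.\<close>
definition res_edges :: "'v edge set \<Rightarrow> ('v edge \<Rightarrow> real) \<Rightarrow> ('v edge \<Rightarrow> real) \<Rightarrow> 'v edge set" where
  "res_edges E \<mu> x =
     {(u, w). (u, w) \<in> E \<and> x (u, w) < \<mu> (u, w)} \<union> {(w, u). (u, w) \<in> E \<and> x (u, w) > 0}"

definition res_cap :: "'v edge set \<Rightarrow> ('v edge \<Rightarrow> real) \<Rightarrow> ('v edge \<Rightarrow> real) \<Rightarrow> ('v edge \<Rightarrow> real) \<Rightarrow> 'v edge \<Rightarrow> real" where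
  "res_cap E \<mu> \<gamma> x e = (if e \<in> E then \<mu> e - x e else \<gamma> (snd e, fst e) * x (snd e, fst e))"

definition res_cost :: "'v edge set \<Rightarrow> ('v edge \<Rightarrow> real) \<Rightarrow> 'v edge \<Rightarrow> real" where
  "res_cost E c e = (if e \<in> E then c e else 0)"

definition res_gain :: "'v edge set \<Rightarrow> ('v edge \<Rightarrow> real) \<Rightarrow> 'v edge \<Rightarrow> real" where
  "res_gain E \<gamma> e = (if e \<in> E then \<gamma> e else 1 / \<gamma> (snd e, fst e))"

definition frac_aug_path ::
  "'v set \<Rightarrow> 'v edge set \<Rightarrow> ('v edge \<Rightarrow> real) \<Rightarrow> ('v edge \<Rightarrow> real) \<Rightarrow> ('v edge \<Rightarrow> real)
   \<Rightarrow> 'v \<Rightarrow> 'v \<Rightarrow> ('v edge \<Rightarrow> real) \<Rightarrow> bool" where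
  "frac_aug_path V E \<mu> \<gamma> x \<tau> s f \<longleftrightarrow>
     (\<forall>e. e \<notin> res_edges E \<mu> x \<longrightarrow> f e = 0) \<and>
     (\<forall>e\<in>res_edges E \<mu> x. f e \<ge> 0) \<and>
     (\<forall>w\<in>V - {\<tau>}.
        (\<Sum>e\<in>{e\<in>res_edges E \<mu> x. fst e = w}. f e)
        - (\<Sum>e\<in>{e\<in>res_edges E \<mu> x. snd e = w}. res_gain E \<gamma> e * f e)
        = (if w = s then 1 else 0))"

definition flow_cost :: "'v edge set \<Rightarrow> ('v edge \<Rightarrow> real) \<Rightarrow> ('v edge \<Rightarrow> real) \<Rightarrow> ('v edge \<Rightarrow> real)
   \<Rightarrow> ('v edge \<Rightarrow> real) \<Rightarrow> real" where
  "flow_cost E \<mu> c x f = (\<Sum>e\<in>res_edges E \<mu> x. res_cost E c e * f e)"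

definition supp :: "'v edge set \<Rightarrow> ('v edge \<Rightarrow> real) \<Rightarrow> 'v edge set" where
  "supp A f = {e\<in>A. f e \<noteq> 0}"

definition path_edges :: "'v list \<Rightarrow> 'v edge set" where
  "path_edges p = set (zip p (tl p))"

definition is_path :: "'v edge set \<Rightarrow> 'v list \<Rightarrow> 'v \<Rightarrow> 'v \<Rightarrow> bool" where
  "is_path A p a b \<longleftrightarrow> distinct p \<and> length p \<ge> 2 \<and> hd p = a \<and> last p = b \<and> path_edges p \<subseteq> A"

definition cycle_edges :: "'v list \<Rightarrow> 'v edge set" where
  "cycle_edges C = set (zip C (tl C @ [hd C]))"

definition is_cycle :: "'v edge set \<Rightarrow> 'v list \<Rightarrow> bool" where
  "is_cycle A C \<longleftrightarrow> distinct C \<and> length C \<ge> 2 \<and> cycle_edges C \<subseteq> A"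

definition aug_path ::
  "'v set \<Rightarrow> 'v edge set \<Rightarrow> ('v edge \<Rightarrow> real) \<Rightarrow> ('v edge \<Rightarrow> real) \<Rightarrow> ('v edge \<Rightarrow> real)
   \<Rightarrow> 'v \<Rightarrow> 'v \<Rightarrow> ('v edge \<Rightarrow> real) \<Rightarrow> bool" where
  "aug_path V E \<mu> \<gamma> x \<tau> s f \<longleftrightarrow>
     frac_aug_path V E \<mu> \<gamma> x \<tau> s f \<and>
     (let A = res_edges E \<mu> x; F = supp A f in
       (\<exists>p. is_path A p s \<tau> \<and> F = path_edges p) \<or>
       (\<exists>C. is_cycle A C \<and> s \<in> set C \<and> \<tau> \<notin> set C \<and> F = cycle_edges C) \<or>
       (\<exists>C p. is_cycle A C \<and> s \<notin> set C \<and> \<tau> \<notin> set C \<and>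
          is_path A p s (last p) \<and> last p \<in> set C \<and> set p \<inter> set C = {last p} \<and>
          F = path_edges p \<union> cycle_edges C))"

end

theory Submission
  imports Defs
begin

(* A fractional augmenting path is a nonnegative solution of a linear system: net outflow 1 at v
   and 0 at every other vertex except the sink. If its support carries a nonzero circulation
   (a solution of the homogeneous system), moving along it, in the direction that does not
   increase the cost, empties an edge. Hence the minimum cost is attained among the flows whose
   support carries no circulation, and there are only finitely many of these because such a
   support determines its flow.
   For such a flow, following support edges from v (a vertex that receives flow must pass it on)
   gives a simple walk ending at the sink or at an earlier vertex. The walk itself carries a unit
   flow, with multipliers given by the products of gains along it (a closing cycle of gain 1
   would carry a circulation), so by uniqueness the support is exactly the edge set of the walk:
   a path to the sink, a cycle through v, or a path followed by a cycle. *)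

definition walk_edges :: "(nat \<Rightarrow> 'v) \<Rightarrow> nat set \<Rightarrow> 'v edge set" where
  "walk_edges w I = (\<lambda>i. (w i, w (Suc i))) ` I"

lemma walk_edges_union: "walk_edges w (I \<union> J) = walk_edges w I \<union> walk_edges w J"
  unfolding walk_edges_def by (rule image_Un)

lemma simple_walk_to_target_or_loop:
  assumes "finite V" "s \<in> V - T"
    and closed: "\<And>u u'. R u u' \<Longrightarrow> u' \<in> V"
    and succ: "\<And>u. u \<in> V - T \<Longrightarrow> u = s \<or> (\<exists>z. R z u) \<Longrightarrow> \<exists>u'. R u u'"
  shows "\<exists>w k. 0 < k \<and> w 0 = s \<and> inj_on w {..<k} \<and> (\<forall>i<k. w i \<notin> T) \<and>
    (\<forall>i<k. R (w i) (w (Suc i))) \<and> (w k \<in> T \<or> w k \<in> w ` {..<k})"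
proof (rule ccontr)
  assume "\<not> ?thesis"
  then have stuck: "\<not> (w k \<in> T \<or> w k \<in> w ` {..<k})"
    if "0 < k" "w 0 = s" "inj_on w {..<k}" "\<forall>i<k. w i \<notin> T" "\<forall>i<k. R (w i) (w (Suc i))" for w k
    using that by blast
  have long_walk: "\<exists>w. w 0 = s \<and> inj_on w {..n} \<and> w ` {..n} \<subseteq> V - T \<and> (\<forall>i<n. R (w i) (w (Suc i)))" for n
  proof (induction n)
    case 0
    show ?case
      using assms(2) by (intro exI[of _ "\<lambda>_. s"]) auto
  next
    case (Suc n)
    then obtain w where w: "w 0 = s" "inj_on w {..n}" "w ` {..n} \<subseteq> V - T" "\<forall>i<n. R (w i) (w (Suc i))"
      by blast
    have "w n = s \<or> (\<exists>z. R z (w n))"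
      using w(1,4) by (cases n) auto
    then obtain u where u: "R (w n) u"
      using succ w(3) by blast
    let ?w = "w(Suc n := u)"
    have walk: "\<forall>i<Suc n. R (?w i) (?w (Suc i))"
      using w(4) u by (auto simp: less_Suc_eq)
    have "{..<Suc n} = {..n}"
      by auto
    moreover have "\<forall>i\<in>{..n}. ?w i = w i"
      by simp
    ultimately have inj: "inj_on ?w {..<Suc n}" and image: "?w ` {..<Suc n} = w ` {..n}"
      using w(2) by (simp_all add: inj_on_def)
    moreover have "\<forall>i<Suc n. ?w i \<notin> T"
      using w(3) by (auto simp: less_Suc_eq_le)
    ultimately have "\<not> (?w (Suc n) \<in> T \<or> ?w (Suc n) \<in> ?w ` {..<Suc n})"
      using stuck[of "Suc n" ?w] walk w(1) by simp
    then have "u \<notin> T" "u \<notin> w ` {..n}"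
      using image by auto
    then have "inj_on ?w {..Suc n}" "?w ` {..Suc n} \<subseteq> V - T"
      using w(2,3) closed[OF u] by (auto simp: atMost_Suc inj_on_def)
    moreover have "?w 0 = s"
      using w(1) by simp
    ultimately show ?case
      using walk by blast
  qed
  obtain w where "inj_on w {..card V}" "w ` {..card V} \<subseteq> V"
    using long_walk[of "card V"] by blast
  then have "card {..card V} \<le> card V"
    using assms(1) by (rule card_inj_on_le)
  then show False
    by simp
qed

lemma path_edges_map_upt:
  assumes "j \<le> m"
  shows "path_edges (map w [j..<Suc m]) = walk_edges w {j..<m}"
proof -
  have "zip (map w [j..<Suc m]) (tl (map w [j..<Suc m])) = map (\<lambda>i. (w i, w (Suc i))) [j..<m]"
    using assms by (simp add: list_eq_iff_nth_eq nth_tl del: upt_Suc)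
  then show ?thesis
    unfolding path_edges_def walk_edges_def by simp
qed

lemma cycle_edges_map_upt:
  assumes "j < k" "w k = w j"
  shows "cycle_edges (map w [j..<k]) = walk_edges w {j..<k}"
proof -
  have "zip (map w [j..<k]) (tl (map w [j..<k]) @ [hd (map w [j..<k])]) = map (\<lambda>i. (w i, w (Suc i))) [j..<k]"
    using assms by (auto simp: list_eq_iff_nth_eq nth_tl nth_append hd_map)
      (metis Suc_diff_Suc add_Suc_right le_add_diff_inverse less_Suc_eq less_imp_le)
  then show ?thesis
    unfolding cycle_edges_def walk_edges_def by simp
qed

lemma is_path_map_upt:
  assumes "j < m" "inj_on w {j..m}" "walk_edges w {j..<m} \<subseteq> A"
  shows "is_path A (map w [j..<Suc m]) (w j) (w m)"
  unfolding is_path_def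
proof (intro conjI)
  show "distinct (map w [j..<Suc m])"
    using assms(2) by (simp add: distinct_map atLeastLessThanSuc_atLeastAtMost del: upt_Suc)
  show "path_edges (map w [j..<Suc m]) \<subseteq> A"
    using assms path_edges_map_upt[of j m w] by simp
qed (use assms(1) in \<open>simp_all add: hd_map\<close>)

lemma is_cycle_map_upt:
  assumes "Suc j < k" "inj_on w {j..<k}" "w k = w j" "walk_edges w {j..<k} \<subseteq> A"
  shows "is_cycle A (map w [j..<k])"
  using assms cycle_edges_map_upt[of j k w] by (simp add: is_cycle_def distinct_map)

definition aug_support :: "'v edge set \<Rightarrow> 'v \<Rightarrow> 'v \<Rightarrow> 'v edge set \<Rightarrow> bool" where
  "aug_support A \<tau> s F \<longleftrightarrow>
     (\<exists>p. is_path A p s \<tau> \<and> F = path_edges p) \<or>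
     (\<exists>C. is_cycle A C \<and> s \<in> set C \<and> \<tau> \<notin> set C \<and> F = cycle_edges C) \<or>
     (\<exists>C p. is_cycle A C \<and> s \<notin> set C \<and> \<tau> \<notin> set C \<and>
        is_path A p s (last p) \<and> last p \<in> set C \<and> set p \<inter> set C = {last p} \<and>
        F = path_edges p \<union> cycle_edges C)"

lemma aug_path_iff_aug_support:
  "aug_path V E \<mu> \<gamma> x \<tau> s f \<longleftrightarrow>
     frac_aug_path V E \<mu> \<gamma> x \<tau> s f \<and> aug_support (res_edges E \<mu> x) \<tau> s (supp (res_edges E \<mu> x) f)"
  unfolding aug_path_def aug_support_def Let_def ..

lemma walk_to_target_aug_support:
  assumes "0 < k" "inj_on w {..<k}" "\<forall>i<k. w i \<noteq> \<tau>" "w k = \<tau>" "walk_edges w {..<k} \<subseteq> A"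
  shows "aug_support A \<tau> (w 0) (walk_edges w {..<k})"
proof -
  have "{0..k} = insert k {..<k}"
    by auto
  then have "inj_on w {0..k}"
    using assms(2-4) by auto
  then have "is_path A (map w [0..<Suc k]) (w 0) \<tau>"
    using is_path_map_upt[of 0 k w A] assms by (simp add: atLeast0LessThan del: upt_Suc)
  moreover have "path_edges (map w [0..<Suc k]) = walk_edges w {..<k}"
    using path_edges_map_upt[of 0 k w] by (simp add: atLeast0LessThan del: upt_Suc)
  ultimately show ?thesis
    unfolding aug_support_def by metis
qed

lemma walk_to_loop_aug_support:
  assumes "j < k" "inj_on w {..<k}" "\<forall>i<k. w i \<noteq> \<tau>" "w k = w j" "walk_edges w {..<k} \<subseteq> A"
    and loop_free: "\<forall>u. (u, u) \<notin> A"
  shows "aug_support A \<tau> (w 0) (walk_edges w {..<k})"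
proof -
  let ?C = "map w [j..<k]"
  have "Suc j \<noteq> k"
    using assms(4,5) loop_free by (auto simp: walk_edges_def)
  then have cycle: "is_cycle A ?C"
    using assms by (intro is_cycle_map_upt) (auto simp: walk_edges_def inj_on_def)
  have tau_C: "\<tau> \<notin> set ?C"
    using assms(3) by auto
  have C: "cycle_edges ?C = walk_edges w {j..<k}"
    using assms(1,4) by (rule cycle_edges_map_upt)
  show ?thesis
  proof (cases "j = 0")
    case True
    then have "w 0 \<in> set ?C" "walk_edges w {..<k} = cycle_edges ?C"
      using assms(1) C by (auto simp: atLeast0LessThan)
    then show ?thesis
      using cycle tau_C unfolding aug_support_def by blast
  next
    case False
    let ?p = "map w [0..<Suc j]"
    have last_p: "last ?p = w j"
      by simp
    have "is_path A ?p (w 0) (w j)"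
      using False assms by (intro is_path_map_upt) (auto simp: walk_edges_def inj_on_def)
    moreover have "w 0 \<notin> set ?C"
      using False assms(1,2) by (auto dest: inj_onD)
    moreover have "set ?p \<inter> set ?C = {last ?p}"
    proof -
      have "{0..<Suc j} \<subseteq> {..<k}" "{j..<k} \<subseteq> {..<k}"
        using assms(1) by auto
      then have "set ?p \<inter> set ?C = w ` ({0..<Suc j} \<inter> {j..<k})"
        by (simp only: set_map set_upt inj_on_image_Int[OF assms(2)])
      also have "{0..<Suc j} \<inter> {j..<k} = {j}"
        using assms(1) by auto
      finally show ?thesis
        using last_p by simp
    qed
    moreover have "walk_edges w {..<k} = path_edges ?p \<union> cycle_edges ?C"
      using assms(1) C path_edges_map_upt[of 0 j w] walk_edges_union[of w "{0..<j}" "{j..<k}"]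
      by (simp add: atLeast0LessThan ivl_disj_un(8) del: upt_Suc)
    ultimately show ?thesis
      using cycle tau_C last_p assms(1) unfolding aug_support_def
      by (intro disjI2 exI[of _ ?C] exI[of _ ?p]) simp
  qed
qed

definition walk_flow :: "(nat \<Rightarrow> 'v) \<Rightarrow> (nat \<Rightarrow> real) \<Rightarrow> nat set \<Rightarrow> 'v edge \<Rightarrow> real" where
  "walk_flow w a I e = (\<Sum>i\<in>I. if e = (w i, w (Suc i)) then a i else 0)"

lemma walk_flow_vanishes: "e \<notin> walk_edges w I \<Longrightarrow> walk_flow w a I e = 0"
  unfolding walk_flow_def walk_edges_def by (rule sum.neutral) auto

lemma walk_flow_pos:
  assumes "finite I" "\<forall>i\<in>I. 0 < a i" "m \<in> I"
  shows "0 < walk_flow w a I (w m, w (Suc m))"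
  unfolding walk_flow_def using assms by (intro sum_pos2[of I m]) auto

locale gain_network =
  fixes V :: "'v set" and A :: "'v edge set" and \<tau> :: 'v and gain cost :: "'v edge \<Rightarrow> real"
  assumes finite_V: "finite V"
    and edges_subset: "A \<subseteq> V \<times> V"
    and loop_free: "(u, u) \<notin> A"
    and gain_pos: "e \<in> A \<Longrightarrow> 0 < gain e"
    and cost_nonneg: "e \<in> A \<Longrightarrow> 0 \<le> cost e"
begin

definition net_outflow :: "('v edge \<Rightarrow> real) \<Rightarrow> 'v \<Rightarrow> real" where
  "net_outflow h u = (\<Sum>e\<in>{e\<in>A. fst e = u}. h e) - (\<Sum>e\<in>{e\<in>A. snd e = u}. gain e * h e)"

definition unit_flow :: "'v \<Rightarrow> ('v edge \<Rightarrow> real) \<Rightarrow> bool" where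
  "unit_flow s f \<longleftrightarrow> (\<forall>e. e \<notin> A \<longrightarrow> f e = 0) \<and> (\<forall>e\<in>A. 0 \<le> f e) \<and>
     (\<forall>u\<in>V - {\<tau>}. net_outflow f u = (if u = s then 1 else 0))"

definition circulation :: "('v edge \<Rightarrow> real) \<Rightarrow> bool" where
  "circulation h \<longleftrightarrow> (\<forall>u\<in>V - {\<tau>}. net_outflow h u = 0)"

definition circulation_free :: "'v edge set \<Rightarrow> bool" where
  "circulation_free F \<longleftrightarrow> (\<forall>h. circulation h \<longrightarrow> (\<forall>e. e \<notin> F \<longrightarrow> h e = 0) \<longrightarrow> (\<forall>e. h e = 0))"

definition total_cost :: "('v edge \<Rightarrow> real) \<Rightarrow> real" where
  "total_cost f = (\<Sum>e\<in>A. cost e * f e)"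

abbreviation support :: "('v edge \<Rightarrow> real) \<Rightarrow> 'v edge set" where
  "support f \<equiv> supp A f"

lemma finite_A: "finite A"
  using finite_subset[OF edges_subset] finite_V by blast

lemma net_outflow_add_scaled:
  "net_outflow (\<lambda>e. f e + t * h e) u = net_outflow f u + t * net_outflow h u"
  unfolding net_outflow_def by (simp add: sum.distrib sum_distrib_left algebra_simps)

lemma net_outflow_scaled: "net_outflow (\<lambda>e. t * h e) u = t * net_outflow h u"
  using net_outflow_add_scaled[of "\<lambda>_. 0" t h u] by (simp add: net_outflow_def)

lemma net_outflow_diff: "net_outflow (\<lambda>e. f e - g e) u = net_outflow f u - net_outflow g u"
  using net_outflow_add_scaled[of f "-1" g u] by simp

lemma total_cost_add_scaled: "total_cost (\<lambda>e. f e + t * h e) = total_cost f + t * total_cost h"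
  unfolding total_cost_def by (simp add: sum.distrib sum_distrib_left algebra_simps)

lemma total_cost_scaled: "total_cost (\<lambda>e. t * h e) = t * total_cost h"
  using total_cost_add_scaled[of "\<lambda>_. 0" t h] by (simp add: total_cost_def)

lemma total_cost_nonneg: "(\<And>e. 0 \<le> h e) \<Longrightarrow> 0 \<le> total_cost h"
  unfolding total_cost_def by (intro sum_nonneg) (simp add: cost_nonneg)

lemma support_subset: "support f \<subseteq> A"
  unfolding supp_def by auto

lemma unit_flow_vanishes_off_support: "unit_flow s f \<Longrightarrow> e \<notin> support f \<Longrightarrow> f e = 0"
  unfolding unit_flow_def supp_def by blast

lemma circulation_freeD:
  "circulation_free F \<Longrightarrow> circulation h \<Longrightarrow> (\<And>e. e \<notin> F \<Longrightarrow> h e = 0) \<Longrightarrow> h e = 0"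
  unfolding circulation_free_def by blast

lemma circulation_free_subset: "circulation_free F \<Longrightarrow> F' \<subseteq> F \<Longrightarrow> circulation_free F'"
  unfolding circulation_free_def by blast

lemma circulation_free_unique:
  assumes "circulation_free F" "\<And>e. e \<notin> F \<Longrightarrow> f e = 0" "\<And>e. e \<notin> F \<Longrightarrow> g e = 0"
    and "\<And>u. u \<in> V - {\<tau>} \<Longrightarrow> net_outflow f u = net_outflow g u"
  shows "f = g"
proof -
  have "circulation (\<lambda>e. f e - g e)"
    using assms(4) by (simp add: circulation_def net_outflow_diff)
  with assms(1) have "f e - g e = 0" for e
    by (rule circulation_freeD) (simp add: assms(2,3))
  then show ?thesis
    by auto
qed

lemma finite_circulation_free_unit_flows:
  "finite {f. unit_flow s f \<and> circulation_free (support f)}"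
proof (rule finite_imageD)
  have "support ` {f. unit_flow s f \<and> circulation_free (support f)} \<subseteq> Pow A"
    using support_subset by blast
  then show "finite (support ` {f. unit_flow s f \<and> circulation_free (support f)})"
    using finite_A by (simp add: finite_subset)
  show "inj_on support {f. unit_flow s f \<and> circulation_free (support f)}"
  proof (rule inj_onI)
    fix f g
    assume "f \<in> {f. unit_flow s f \<and> circulation_free (support f)}"
      and "g \<in> {f. unit_flow s f \<and> circulation_free (support f)}" and "support f = support g"
    then have f: "unit_flow s f" "circulation_free (support f)" and g: "unit_flow s g"
      and same_support: "support g = support f"
      by auto
    show "f = g"
    proof (rule circulation_free_unique[OF f(2)])
      show "f e = 0" "g e = 0" if "e \<notin> support f" for e
        using that f(1) g unit_flow_vanishes_off_support same_support by metis+
      show "net_outflow f u = net_outflow g u" if "u \<in> V - {\<tau>}" for u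
        using that f(1) g unfolding unit_flow_def by simp
    qed
  qed
qed

lemma descent_circulation:
  assumes "\<not> circulation_free F"
  obtains h e\<^sub>0 where "circulation h" "total_cost h \<le> 0" "h e\<^sub>0 < 0" "\<And>e. e \<notin> F \<Longrightarrow> h e = 0"
proof -
  obtain h e\<^sub>1 where h: "circulation h" "h e\<^sub>1 \<noteq> 0" and h_off: "\<And>e. e \<notin> F \<Longrightarrow> h e = 0"
    using assms unfolding circulation_free_def by blast
  obtain \<sigma> :: real where \<sigma>: "total_cost (\<lambda>e. \<sigma> * h e) \<le> 0" "\<exists>e\<^sub>0. \<sigma> * h e\<^sub>0 < 0"
  proof (cases "total_cost h = 0")
    case True
    define \<sigma> :: real where "\<sigma> = (if h e\<^sub>1 > 0 then -1 else 1)"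
    have "\<sigma> * h e\<^sub>1 < 0"
      using h(2) by (simp add: \<sigma>_def)
    then show ?thesis
      using True by (intro that[of \<sigma>] exI[of _ e\<^sub>1]) (simp_all add: total_cost_scaled)
  next
    case False
    define \<sigma> :: real where "\<sigma> = (if total_cost h < 0 then 1 else -1)"
    have "total_cost (\<lambda>e. \<sigma> * h e) < 0"
      using False by (simp add: \<sigma>_def total_cost_scaled)
    then have "\<exists>e\<^sub>0. \<sigma> * h e\<^sub>0 < 0"
      using total_cost_nonneg[of "\<lambda>e. \<sigma> * h e"] by (meson not_less)
    then show ?thesis
      using \<open>total_cost (\<lambda>e. \<sigma> * h e) < 0\<close> by (intro that[of \<sigma>]) auto
  qed
  from \<sigma>(2) obtain e\<^sub>0 where "\<sigma> * h e\<^sub>0 < 0"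
    by blast
  show ?thesis
  proof (rule that)
    show "circulation (\<lambda>e. \<sigma> * h e)"
      using h(1) by (simp add: circulation_def net_outflow_scaled)
    show "\<sigma> * h e = 0" if "e \<notin> F" for e
      using h_off[OF that] by simp
  qed fact+
qed

lemma shrink_support:
  assumes g: "unit_flow s g" and h: "circulation h" "total_cost h \<le> 0" "h e\<^sub>1 < 0"
    and h_off: "\<And>e. e \<notin> support g \<Longrightarrow> h e = 0"
  shows "\<exists>g'. unit_flow s g' \<and> total_cost g' \<le> total_cost g \<and> support g' \<subset> support g"
proof -
  \<comment> \<open>Move from g along h until the first edge of the support runs empty.\<close>
  define N where "N = {e \<in> support g. h e < 0}"
  define ratio where "ratio e = g e / - h e" for e
  have in_N: "e \<in> N" if "h e < 0" for e
    using that h_off[of e] unfolding N_def by force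
  have "finite N"
    using finite_A support_subset unfolding N_def by (auto intro: finite_subset)
  then obtain e\<^sub>0 where e\<^sub>0: "e\<^sub>0 \<in> N" and min: "\<And>e. e \<in> N \<Longrightarrow> ratio e\<^sub>0 \<le> ratio e"
    using ex_is_arg_min_if_finite[of N ratio] in_N[OF h(3)] unfolding is_arg_min_linorder by blast
  define t where "t = ratio e\<^sub>0"
  have "0 < g e\<^sub>0" "h e\<^sub>0 < 0"
    using g e\<^sub>0 unfolding unit_flow_def supp_def N_def by force+
  then have "0 < t"
    unfolding t_def ratio_def by (simp add: divide_pos_neg)
  define g' where "g' e = g e + t * h e" for e
  have "unit_flow s g'"
    unfolding unit_flow_def
  proof (intro conjI allI impI ballI)
    fix e
    assume "e \<notin> A"
    then have "e \<notin> support g"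
      using support_subset by blast
    then show "g' e = 0"
      using g h_off unit_flow_vanishes_off_support unfolding g'_def by simp
  next
    fix e
    assume "e \<in> A"
    show "0 \<le> g' e"
    proof (cases "h e < 0")
      case True
      then have "t \<le> g e / - h e"
        using min[OF in_N] unfolding t_def ratio_def by simp
      then have "t * - h e \<le> g e"
        using True by (metis neg_0_less_iff_less pos_le_divide_eq)
      then show ?thesis
        unfolding g'_def by simp
    next
      case False
      then show ?thesis
        using g \<open>e \<in> A\<close> \<open>0 < t\<close> unfolding unit_flow_def g'_def by simp
    qed
  next
    fix u
    assume "u \<in> V - {\<tau>}"
    then show "net_outflow g' u = (if u = s then 1 else 0)"
      using g h(1) unfolding unit_flow_def circulation_def g'_def
      by (simp add: net_outflow_add_scaled)
  qed
  moreover have "total_cost g' \<le> total_cost g"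
    using \<open>0 < t\<close> h(2) unfolding g'_def total_cost_add_scaled by (simp add: mult_nonneg_nonpos)
  moreover have "support g' \<subseteq> support g - {e\<^sub>0}"
  proof -
    have "g' e\<^sub>0 = 0"
      using \<open>h e\<^sub>0 < 0\<close> unfolding g'_def t_def ratio_def by simp
    moreover have "g' e = 0" if "e \<notin> support g" for e
      using that g h_off unit_flow_vanishes_off_support unfolding g'_def by simp
    ultimately show ?thesis
      unfolding supp_def by blast
  qed
  moreover have "e\<^sub>0 \<in> support g"
    using e\<^sub>0 unfolding N_def by simp
  ultimately show ?thesis
    by blast
qed

lemma exists_circulation_free_unit_flow:
  "unit_flow s g \<Longrightarrow> \<exists>f. unit_flow s f \<and> circulation_free (support f) \<and> total_cost f \<le> total_cost g"
proof (induction "card (support g)" arbitrary: g rule: less_induct)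
  case less
  show ?case
  proof (cases "circulation_free (support g)")
    case True
    then show ?thesis
      using less.prems by blast
  next
    case False
    then obtain h e\<^sub>0 where "circulation h" "total_cost h \<le> 0" "h e\<^sub>0 < 0"
        and "\<And>e. e \<notin> support g \<Longrightarrow> h e = 0"
      by (rule descent_circulation) blast
    then have "\<exists>g'. unit_flow s g' \<and> total_cost g' \<le> total_cost g \<and> support g' \<subset> support g"
      by (rule shrink_support[OF less.prems])
    then obtain g' where g': "unit_flow s g'" "total_cost g' \<le> total_cost g" "support g' \<subset> support g"
      by blast
    have "card (support g') < card (support g)"
      using g'(3) finite_A support_subset by (meson finite_subset psubset_card_mono)
    then show ?thesis
      using less.hyps g'(1,2) by (meson order_trans)
  qed
qed

lemma min_cost_unit_flow_circulation_free:
  assumes "\<exists>g. unit_flow s g"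
  shows "\<exists>f. unit_flow s f \<and> circulation_free (support f) \<and>
    (\<forall>g. unit_flow s g \<longrightarrow> total_cost f \<le> total_cost g)"
proof -
  let ?K = "{f. unit_flow s f \<and> circulation_free (support f)}"
  have "?K \<noteq> {}"
    using assms exists_circulation_free_unit_flow by blast
  then obtain f where f: "f \<in> ?K" and min: "\<And>f'. f' \<in> ?K \<Longrightarrow> total_cost f \<le> total_cost f'"
    using ex_is_arg_min_if_finite[OF finite_circulation_free_unit_flows, where f = total_cost]
    unfolding is_arg_min_linorder by blast
  have "total_cost f \<le> total_cost g" if g: "unit_flow s g" for g
  proof -
    obtain f' where "f' \<in> ?K" "total_cost f' \<le> total_cost g"
      using exists_circulation_free_unit_flow[OF g] by blast
    then show ?thesis
      using min[of f'] by simp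
  qed
  then show ?thesis
    using f by blast
qed

lemma support_out_edge:
  assumes f: "unit_flow s f" and u: "u \<in> V - {\<tau>}" and "u = s \<or> (\<exists>z. (z, u) \<in> support f)"
  shows "\<exists>u'. (u, u') \<in> support f"
proof -
  let ?out = "\<Sum>e\<in>{e\<in>A. fst e = u}. f e"
  let ?in = "\<Sum>e\<in>{e\<in>A. snd e = u}. gain e * f e"
  have balance: "?out = (if u = s then 1 else 0) + ?in"
    using f u unfolding unit_flow_def net_outflow_def by (simp add: algebra_simps)
  have in_terms_nonneg: "0 \<le> gain e * f e" if "e \<in> A" for e
    using f that gain_pos unfolding unit_flow_def by (simp add: less_imp_le)
  then have "0 \<le> ?in"
    by (intro sum_nonneg) simp
  moreover have "0 < ?in" if z: "(z, u) \<in> support f" for z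
  proof -
    have "0 < f (z, u)"
      using f z unfolding unit_flow_def supp_def by force
    moreover have "0 < gain (z, u)"
      using z support_subset by (blast intro: gain_pos)
    ultimately have "0 < gain (z, u) * f (z, u)"
      by simp
    also have "\<dots> \<le> ?in"
      using z support_subset finite_A in_terms_nonneg
      by (intro member_le_sum[where f = "\<lambda>e. gain e * f e"]) auto
    finally show ?thesis .
  qed
  ultimately have "?out \<noteq> 0"
    using balance assms(3) by (cases "u = s") auto
  then obtain e where "e \<in> {e\<in>A. fst e = u}" "f e \<noteq> 0"
    by (rule sum.not_neutral_contains_not_neutral)
  then show ?thesis
    by (intro exI[of _ "snd e"]) (auto simp: supp_def)
qed

lemma net_outflow_walk_flow:
  assumes "finite I" "walk_edges w I \<subseteq> A"
  shows "net_outflow (walk_flow w a I) u =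
    (\<Sum>i\<in>I. (if w i = u then a i else 0) - (if w (Suc i) = u then gain (w i, w (Suc i)) * a i else 0))"
proof -
  have edge: "(w i, w (Suc i)) \<in> A" if "i \<in> I" for i
    using assms(2) that unfolding walk_edges_def by blast
  have "(\<Sum>e\<in>{e\<in>A. fst e = u}. walk_flow w a I e) = (\<Sum>i\<in>I. if w i = u then a i else 0)"
    unfolding walk_flow_def using finite_A edge
    by (subst sum.swap) (auto intro!: sum.cong simp: sum.delta)
  moreover have "(\<Sum>e\<in>{e\<in>A. snd e = u}. gain e * walk_flow w a I e) =
      (\<Sum>i\<in>I. if w (Suc i) = u then gain (w i, w (Suc i)) * a i else 0)"
    unfolding walk_flow_def sum_distrib_left using finite_A edge
    by (subst sum.swap) (auto intro!: sum.cong simp: if_distrib sum.delta cong: if_cong)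
  ultimately show ?thesis
    unfolding net_outflow_def by (simp add: sum_subtractf)
qed

definition walk_gain :: "(nat \<Rightarrow> 'v) \<Rightarrow> nat \<Rightarrow> real" where
  "walk_gain w i = (\<Prod>l<i. gain (w l, w (Suc l)))"

lemma walk_gain_Suc: "walk_gain w (Suc i) = gain (w i, w (Suc i)) * walk_gain w i"
  unfolding walk_gain_def by simp

lemma walk_gain_pos: "walk_edges w {..<i} \<subseteq> A \<Longrightarrow> 0 < walk_gain w i"
  unfolding walk_gain_def walk_edges_def by (intro prod_pos) (auto intro: gain_pos)

lemma net_outflow_walk_segment:
  assumes "j \<le> l" "walk_edges w {j..<l} \<subseteq> A"
  shows "net_outflow (walk_flow w (walk_gain w) {j..<l}) u =
    (if w j = u then walk_gain w j else 0) - (if w l = u then walk_gain w l else 0)"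
proof -
  define \<phi> where "\<phi> i = (if w i = u then walk_gain w i else 0)" for i
  have "net_outflow (walk_flow w (walk_gain w) {j..<l}) u = (\<Sum>i = j..<l. \<phi> i - \<phi> (Suc i))"
    unfolding net_outflow_walk_flow[OF finite_atLeastLessThan assms(2)] \<phi>_def
    by (intro sum.cong refl) (simp add: walk_gain_Suc)
  also have "\<dots> = \<phi> j - \<phi> l"
    using sum_Suc_diff'[OF assms(1), of "\<lambda>i. - \<phi> i"] by simp
  finally show ?thesis
    unfolding \<phi>_def .
qed

lemma walk_carries_unit_flow:
  assumes edges: "walk_edges w {..<k} \<subseteq> A"
    and free: "circulation_free (walk_edges w {..<k})"
    and ends: "w k = \<tau> \<or> (\<exists>j<k. w k = w j)"
  obtains f where "\<And>e. e \<notin> walk_edges w {..<k} \<Longrightarrow> f e = 0"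
    and "\<And>u. u \<in> V - {\<tau>} \<Longrightarrow> net_outflow f u = (if u = w 0 then 1 else 0)"
proof -
  let ?G = "walk_gain w"
  have segment_edges: "walk_edges w {j..<l} \<subseteq> A" if "l \<le> k" for j l
    using edges that unfolding walk_edges_def by auto
  have segment_off: "walk_flow w ?G {j..<l} e = 0" if "l \<le> k" "e \<notin> walk_edges w {..<k}" for j l e
    using that by (intro walk_flow_vanishes) (auto simp: walk_edges_def)
  have net_segment: "net_outflow (walk_flow w ?G {j..<l}) u =
      (if w j = u then ?G j else 0) - (if w l = u then ?G l else 0)" if "j \<le> l" "l \<le> k" for j l u
    using that segment_edges by (intro net_outflow_walk_segment) auto
  have "?G 0 = 1"
    by (simp add: walk_gain_def)
  from ends show thesis
  proof
    assume "w k = \<tau>"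
    show thesis
    proof (rule that[of "walk_flow w ?G {0..<k}"])
      show "walk_flow w ?G {0..<k} e = 0" if "e \<notin> walk_edges w {..<k}" for e
        using that by (rule segment_off[OF order_refl])
      show "net_outflow (walk_flow w ?G {0..<k}) u = (if u = w 0 then 1 else 0)" if "u \<in> V - {\<tau>}" for u
        using that \<open>w k = \<tau>\<close> \<open>?G 0 = 1\<close> net_segment[of 0 k u] by auto
    qed
  next
    assume "\<exists>j<k. w k = w j"
    then obtain j where j: "j < k" "w k = w j"
      by blast
    let ?P = "walk_flow w ?G {0..<j}" and ?C = "walk_flow w ?G {j..<k}"
    have net_C: "net_outflow ?C u = (if w j = u then ?G j - ?G k else 0)" for u
      using net_segment[of j k u] j by simp
    have "?G k \<noteq> ?G j"
    proof
      assume "?G k = ?G j"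
      then have "circulation ?C"
        using net_C by (simp add: circulation_def)
      with free have "?C (w j, w (Suc j)) = 0"
        by (rule circulation_freeD) (rule segment_off[OF order_refl])
      moreover have "0 < ?C (w j, w (Suc j))"
        using j(1) edges by (intro walk_flow_pos walk_gain_pos ballI) (auto simp: walk_edges_def)
      ultimately show False
        by simp
    qed
    \<comment> \<open>The stem flow ?P leaves the deficit ?G j at w j; the cycle flow ?C has the surplus
      ?G j - ?G k there, which is nonzero because the cycle gain ?G k / ?G j is not 1.\<close>
    define f where "f e = ?P e + ?G j / (?G j - ?G k) * ?C e" for e
    show thesis
    proof (rule that[of f])
      show "f e = 0" if "e \<notin> walk_edges w {..<k}" for e
        using that j(1) segment_off unfolding f_def by simp
      show "net_outflow f u = (if u = w 0 then 1 else 0)" for u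
        using net_segment[of 0 j u] j \<open>?G 0 = 1\<close> \<open>?G k \<noteq> ?G j\<close>
        unfolding f_def net_outflow_add_scaled net_C by auto
    qed
  qed
qed

lemma circulation_free_unit_flow_aug_support:
  assumes f: "unit_flow s f" and free: "circulation_free (support f)" and s: "s \<in> V - {\<tau>}"
  shows "aug_support A \<tau> s (support f)"
proof -
  obtain w k where walk: "0 < k" "w 0 = s" "inj_on w {..<k}" "\<forall>i<k. w i \<notin> {\<tau>}"
      "\<forall>i<k. (w i, w (Suc i)) \<in> support f" "w k \<in> {\<tau>} \<or> w k \<in> w ` {..<k}"
    using simple_walk_to_target_or_loop[OF finite_V s, of "\<lambda>u u'. (u, u') \<in> support f"]
      support_out_edge[OF f] support_subset edges_subset by blast
  have walk_support: "walk_edges w {..<k} \<subseteq> support f"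
    using walk(5) unfolding walk_edges_def by blast
  then have walk_edges: "walk_edges w {..<k} \<subseteq> A"
    using support_subset by blast
  obtain f' where f'_off: "\<And>e. e \<notin> walk_edges w {..<k} \<Longrightarrow> f' e = 0"
      and f'_net: "\<And>u. u \<in> V - {\<tau>} \<Longrightarrow> net_outflow f' u = (if u = s then 1 else 0)"
    using walk_carries_unit_flow[OF walk_edges circulation_free_subset[OF free walk_support]] walk(2,6)
    by blast
  have "f = f'"
  proof (rule circulation_free_unique[OF free])
    show "f e = 0" if "e \<notin> support f" for e
      using f that by (rule unit_flow_vanishes_off_support)
    show "f' e = 0" if "e \<notin> support f" for e
      using that walk_support by (intro f'_off) blast
    show "net_outflow f u = net_outflow f' u" if "u \<in> V - {\<tau>}" for u
      using f that f'_net unfolding unit_flow_def by simp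
  qed
  then have "support f = walk_edges w {..<k}"
    using walk_support f'_off unfolding supp_def by auto
  moreover have "aug_support A \<tau> s (walk_edges w {..<k})"
    using walk(6)
  proof
    assume "w k \<in> {\<tau>}"
    then show ?thesis
      using walk walk_edges walk_to_target_aug_support[of k w \<tau> A] by auto
  next
    assume "w k \<in> w ` {..<k}"
    then obtain j where "j < k" "w k = w j"
      by auto
    then show ?thesis
      using walk walk_edges loop_free walk_to_loop_aug_support[of j k w \<tau> A] by auto
  qed
  ultimately show ?thesis
    by simp
qed

end

lemma gain_network_residual:
  assumes "gnf_instance V E S \<tau> \<mu> c \<gamma>"
  shows "gain_network V (res_edges E \<mu> x) (res_gain E \<gamma>) (res_cost E c)"
proof
  show "finite V"
    using assms unfolding gnf_instance_def by blast
  show "res_edges E \<mu> x \<subseteq> V \<times> V"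
    using assms unfolding gnf_instance_def res_edges_def by auto
  show "(u, u) \<notin> res_edges E \<mu> x" for u
    using assms unfolding gnf_instance_def res_edges_def by auto
  show "0 < res_gain E \<gamma> e" if "e \<in> res_edges E \<mu> x" for e
    using assms that unfolding gnf_instance_def res_edges_def res_gain_def by auto
  show "0 \<le> res_cost E c e" for e
    using assms unfolding gnf_instance_def res_cost_def by (auto simp: less_imp_le)
qed

theorem lemma1:
  fixes V :: "'v set" and E :: "'v edge set" and S :: "'v set" and \<tau> v :: 'v
    and \<mu> c \<gamma> x :: "'v edge \<Rightarrow> real"
  assumes "gnf_instance V E S \<tau> \<mu> c \<gamma>"
    and "\<forall>e\<in>E. 0 \<le> x e \<and> x e \<le> \<mu> e"
    and "v \<in> V - {\<tau>}"
    and "\<exists>g. frac_aug_path V E \<mu> \<gamma> x \<tau> v g"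
  shows "\<exists>f. aug_path V E \<mu> \<gamma> x \<tau> v f \<and>
           (\<forall>g. frac_aug_path V E \<mu> \<gamma> x \<tau> v g \<longrightarrow> flow_cost E \<mu> c x f \<le> flow_cost E \<mu> c x g)"
proof -
  interpret residual: gain_network V "res_edges E \<mu> x" \<tau> "res_gain E \<gamma>" "res_cost E c"
    using assms(1) by (rule gain_network_residual)
  have frac_aug_path_iff: "frac_aug_path V E \<mu> \<gamma> x \<tau> v g \<longleftrightarrow> residual.unit_flow v g" for g
    unfolding frac_aug_path_def residual.unit_flow_def residual.net_outflow_def ..
  have flow_cost_eq: "flow_cost E \<mu> c x g = residual.total_cost g" for g
    unfolding flow_cost_def residual.total_cost_def ..
  obtain f where f: "residual.unit_flow v f" "residual.circulation_free (supp (res_edges E \<mu> x) f)"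
      and min: "\<forall>g. residual.unit_flow v g \<longrightarrow> residual.total_cost f \<le> residual.total_cost g"
    using residual.min_cost_unit_flow_circulation_free assms(4) unfolding frac_aug_path_iff by blast
  have "aug_path V E \<mu> \<gamma> x \<tau> v f"
    unfolding aug_path_iff_aug_support frac_aug_path_iff
    using f assms(3) by (blast intro: residual.circulation_free_unit_flow_aug_support)
  then show ?thesis
    using min unfolding frac_aug_path_iff flow_cost_eq by blast
qed

end
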